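(* Let $r\geq 3$ and $k\geq 2$, and let $G$ be a $\mathcal{G}^{(r)}_k$-free $r$-graph. Then every maximal connected subgraph of $G$ (i.e. every element of the partition $\mathcal{M}_{1}$ of $E(G)$ into maximal connected subgraphs) is an $m$-tree for some $m\in\{1,\dots,k-1\}$.
   Context: An $r$-graph is an $r$-uniform hypergraph, identified with its edge set. An $(s,k)$-configuration is an $r$-graph with exactly $k$ edges and at most $s$ vertices. $\mathcal{G}^{(r)}_k$ is the family of all $r$-graphs that are either $(rk-2k+2,k)$-configurations or $(r\ell-2\ell+1,\ell)$-configurations for some $\ell\in\{2,\dots,k-1\}$; $\mathcal{G}^{(r)}_k$-free means containing no member of this family as a subgraph. An $r$-graph $F$ is connected if for any two edges $X,Y$ of $F$ there is a sequence of edges $X=X_1,\dots,X_m=Y$ of $F$ with $|X_i\cap X_{i+1}|\ge2$ for all $i$. A $1$-tree is an $r$-graph with a single edge; for $i\geq2$ an $i$-tree is an $r$-graph obtained from an $(i-1)$-tree $T$ by adding a new edge consisting of a pair of vertices contained together in some edge of $T$ and $r-2$ new vertices not in $T$. *)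

theory Defs
  imports Main
begin

text \<open>An r-graph is identified with its edge set: a set of r-element vertex sets.\<close>
definition r_graph :: "nat \<Rightarrow> 'a set set \<Rightarrow> bool" where
  "r_graph r G \<longleftrightarrow> (\<forall>e\<in>G. finite e \<and> card e = r)"

definition vertices :: "'a set set \<Rightarrow> 'a set" where
  "vertices F = \<Union>F"

definition configuration :: "nat \<Rightarrow> nat \<Rightarrow> nat \<Rightarrow> 'a set set \<Rightarrow> bool" where
  "configuration r s k F \<longleftrightarrow>
     r_graph r F \<and> finite F \<and> card F = k \<and> finite (vertices F) \<and> card (vertices F) \<le> s"

definition in_family_G :: "nat \<Rightarrow> nat \<Rightarrow> 'a set set \<Rightarrow> bool" where
  "in_family_G r k F \<longleftrightarrow>
     configuration r (r*k - 2*k + 2) k F \<or>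
     (\<exists>l\<in>{2..k-1}. configuration r (r*l - 2*l + 1) l F)"

definition G_free :: "nat \<Rightarrow> nat \<Rightarrow> 'a set set \<Rightarrow> bool" where
  "G_free r k G \<longleftrightarrow> \<not> (\<exists>F. F \<subseteq> G \<and> in_family_G r k F)"

definition connected_hg :: "'a set set \<Rightarrow> bool" where
  "connected_hg F \<longleftrightarrow>
     (\<forall>X\<in>F. \<forall>Y\<in>F. \<exists>xs. xs \<noteq> [] \<and> hd xs = X \<and> last xs = Y \<and> set xs \<subseteq> F \<and>
        (\<forall>i. Suc i < length xs \<longrightarrow> card (xs ! i \<inter> xs ! Suc i) \<ge> 2))"

definition maximal_connected_subgraph :: "'a set set \<Rightarrow> 'a set set \<Rightarrow> bool" where
  "maximal_connected_subgraph G F \<longleftrightarrow>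
     F \<subseteq> G \<and> F \<noteq> {} \<and> connected_hg F \<and>
     (\<forall>F'. F \<subseteq> F' \<and> F' \<subseteq> G \<and> connected_hg F' \<longrightarrow> F' = F)"

inductive is_tree :: "nat \<Rightarrow> nat \<Rightarrow> 'a set set \<Rightarrow> bool" for r :: nat where
  one: "finite e \<Longrightarrow> card e = r \<Longrightarrow> is_tree r 1 {e}"
| step: "is_tree r i T \<Longrightarrow> e \<in> T \<Longrightarrow> P \<subseteq> e \<Longrightarrow> card P = 2 \<Longrightarrow>
         finite N \<Longrightarrow> card N = r - 2 \<Longrightarrow> N \<inter> vertices T = {} \<Longrightarrow>
         is_tree r (Suc i) (insert (P \<union> N) T)"

end

theory Submission
  imports Defs
begin

text \<open>Grow a tree inside a connected subgraph F one edge at a time, each new edge meeting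
  an old one in at least two vertices. An i-tree has (r-2)i+2 vertices, so a new edge
  meeting the old vertex set in three or more vertices would give an
  ((r-2)(i+1)+1, i+1)-configuration; hence while i+1 < k every extension is again a tree.
  Extending a (k-1)-tree by one more edge of F would give a ((r-2)k+2, k)-configuration,
  so F has fewer than k edges and the process exhausts F.\<close>

lemma list_crosses_boundary:
  assumes "xs \<noteq> []" "hd xs \<in> T" "last xs \<notin> T"
  shows "\<exists>i. Suc i < length xs \<and> xs ! i \<in> T \<and> xs ! Suc i \<notin> T"
  using assms
proof (induction xs)
  case Nil
  then show ?case by simp
next
  case (Cons x xs)
  show ?case
  proof (cases "xs \<noteq> [] \<and> hd xs \<in> T")
    case True
    with Cons obtain i where "Suc i < length xs" "xs ! i \<in> T" "xs ! Suc i \<notin> T"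
      by auto
    then show ?thesis by (intro exI[of _ "Suc i"]) auto
  next
    case False
    with Cons.prems have "xs \<noteq> []" "hd xs \<notin> T" by auto
    with Cons.prems show ?thesis by (intro exI[of _ 0]) (auto simp: hd_conv_nth)
  qed
qed

lemma connected_hg_grow:
  assumes "connected_hg F" "T \<subseteq> F" "T \<noteq> {}" "T \<noteq> F"
  shows "\<exists>e\<in>F - T. \<exists>X\<in>T. 2 \<le> card (e \<inter> X)"
proof -
  obtain X Y where XY: "X \<in> T" "Y \<in> F - T" using assms by auto
  with assms(2) have "X \<in> F" "Y \<in> F" by auto
  with assms(1) obtain xs where xs: "xs \<noteq> []" "hd xs = X" "last xs = Y" "set xs \<subseteq> F"
    and link: "\<forall>i. Suc i < length xs \<longrightarrow> 2 \<le> card (xs ! i \<inter> xs ! Suc i)"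
    unfolding connected_hg_def by meson
  obtain i where i: "Suc i < length xs" "xs ! i \<in> T" "xs ! Suc i \<notin> T"
    using list_crosses_boundary[of xs T] xs XY by auto
  have "xs ! Suc i \<in> F" using i(1) xs(4) nth_mem by blast
  with i link show ?thesis by (metis DiffI Int_commute)
qed

lemma finite_vertices:
  assumes "r_graph r T" "finite T"
  shows "finite (vertices T)"
  using assms unfolding r_graph_def vertices_def by auto

lemma card_vertices_insert:
  assumes "finite e" "finite (vertices T)"
  shows "card (vertices (insert e T)) + card (e \<inter> vertices T) = card (vertices T) + card e"
proof -
  have "vertices (insert e T) = e \<union> vertices T" unfolding vertices_def by auto
  then show ?thesis using card_Un_Int[OF assms] by simp
qed

lemma is_tree_card_vertices:
  assumes "is_tree r n T" "2 \<le> r"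
  shows "finite (vertices T) \<and> card (vertices T) = (r - 2) * n + 2"
  using assms(1)
proof (induction rule: is_tree.induct)
  case (one e)
  with assms(2) show ?case by (simp add: vertices_def)
next
  case (step i T e P N)
  have "P \<subseteq> vertices T" using step.hyps(2,3) unfolding vertices_def by auto
  then have "vertices (insert (P \<union> N) T) = vertices T \<union> N" unfolding vertices_def by auto
  with step show ?case by (simp add: card_Un_disjoint Int_commute)
qed

lemma card_inter_le_inter_vertices:
  assumes "finite e" "X \<in> T"
  shows "card (e \<inter> X) \<le> card (e \<inter> vertices T)"
  using assms by (intro card_mono) (auto simp: vertices_def)

lemma is_tree_insert:
  assumes tree: "is_tree r n T" and "X \<in> T" "finite e" "card e = r"
    and meets: "2 \<le> card (e \<inter> X)" and sparse: "card (e \<inter> vertices T) \<le> 2"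
  shows "is_tree r (Suc n) (insert e T)"
proof -
  have sub: "e \<inter> X \<subseteq> e \<inter> vertices T" using \<open>X \<in> T\<close> unfolding vertices_def by auto
  have le: "card (e \<inter> X) \<le> card (e \<inter> vertices T)"
    using \<open>finite e\<close> \<open>X \<in> T\<close> by (rule card_inter_le_inter_vertices)
  with meets sparse have two: "card (e \<inter> vertices T) = 2" by simp
  with sub meets le \<open>finite e\<close> have P: "e \<inter> X = e \<inter> vertices T"
    by (intro card_subset_eq) auto
  have "card (e - vertices T) = r - 2"
    using card_Diff_subset_Int[of e "vertices T"] \<open>finite e\<close> \<open>card e = r\<close> two by simp
  then have "is_tree r (Suc n) (insert ((e \<inter> X) \<union> (e - vertices T)) T)"
    by (intro is_tree.step[OF tree \<open>X \<in> T\<close>]) (use two P \<open>finite e\<close> in auto)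
  moreover have "(e \<inter> X) \<union> (e - vertices T) = e" using P by auto
  ultimately show ?thesis by simp
qed

locale G_free_hypergraph =
  fixes r k :: nat and G :: "'a set set"
  assumes r: "3 \<le> r" and k: "2 \<le> k"
    and finite_G: "finite G" and r_graph_G: "r_graph r G" and free: "G_free r k G"
begin

lemma finite_edge: "e \<in> G \<Longrightarrow> finite e"
  and card_edge: "e \<in> G \<Longrightarrow> card e = r"
  using r_graph_G unfolding r_graph_def by auto

lemma finite_subgraph: "H \<subseteq> G \<Longrightarrow> finite H"
  using finite_G finite_subset by blast

lemma subgraph_configuration_iff:
  assumes "H \<subseteq> G"
  shows "configuration r s l H \<longleftrightarrow> card H = l \<and> card (vertices H) \<le> s"
proof -
  have "r_graph r H" using assms r_graph_G unfolding r_graph_def by auto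
  with finite_subgraph[OF assms] show ?thesis
    unfolding configuration_def using finite_vertices by blast
qed

lemma card_vertices_gt_below_k:
  assumes "H \<subseteq> G" "card H = l" "2 \<le> l" "l < k"
  shows "(r - 2) * l + 1 < card (vertices H)"
proof (rule ccontr)
  assume "\<not> ?thesis"
  then have "configuration r (r * l - 2 * l + 1) l H"
    using subgraph_configuration_iff[OF assms(1)] assms(2) by (simp add: diff_mult_distrib)
  with assms have "in_family_G r k H" unfolding in_family_G_def by auto
  with free assms(1) show False unfolding G_free_def by blast
qed

lemma card_vertices_gt_k_edges:
  assumes "H \<subseteq> G" "card H = k"
  shows "(r - 2) * k + 2 < card (vertices H)"
proof (rule ccontr)
  assume "\<not> ?thesis"
  then have "configuration r (r * k - 2 * k + 2) k H"
    using subgraph_configuration_iff[OF assms(1)] assms(2) by (simp add: diff_mult_distrib)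
  then have "in_family_G r k H" unfolding in_family_G_def by blast
  with free assms(1) show False unfolding G_free_def by blast
qed

lemma card_vertices_tree_extension:
  assumes "insert e T \<subseteq> G" "is_tree r n T"
  shows "card (vertices (insert e T)) + card (e \<inter> vertices T) = (r - 2) * n + 2 + r"
proof -
  have "finite e" "card e = r" using assms(1) finite_edge card_edge by auto
  moreover have "finite (vertices T)" "card (vertices T) = (r - 2) * n + 2"
    using is_tree_card_vertices[OF assms(2)] r by auto
  ultimately show ?thesis using card_vertices_insert[of e T] by simp
qed

lemma tree_extension_is_tree:
  assumes G: "insert e T \<subseteq> G" "e \<notin> T" and tree: "is_tree r n T" "card T = n"
    and X: "X \<in> T" "2 \<le> card (e \<inter> X)" and "Suc n < k"
  shows "is_tree r (Suc n) (insert e T)"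
proof (rule is_tree_insert[OF tree(1) X(1) _ _ X(2)])
  show "finite e" "card e = r" using G finite_edge card_edge by auto
  have "finite T" using G finite_subgraph by blast
  with G tree(2) have "card (insert e T) = Suc n" by simp
  with G \<open>Suc n < k\<close> tree(2) X(1) \<open>finite T\<close>
  have "(r - 2) * Suc n + 1 < card (vertices (insert e T))"
    by (intro card_vertices_gt_below_k) (auto simp: Suc_le_eq card_gt_0_iff)
  with card_vertices_tree_extension[OF G(1) tree(1)] r
  show "card (e \<inter> vertices T) \<le> 2" by simp
qed

lemma no_extension_of_tree_to_k_edges:
  assumes G: "insert e T \<subseteq> G" "e \<notin> T" and tree: "is_tree r n T" "card T = n"
    and X: "X \<in> T" "2 \<le> card (e \<inter> X)" and "Suc n = k"
  shows False
proof -
  have "finite T" using G finite_subgraph by blast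
  with G tree(2) \<open>Suc n = k\<close> have "card (insert e T) = k" by simp
  with G \<open>Suc n = k\<close> have "(r - 2) * Suc n + 2 < card (vertices (insert e T))"
    using card_vertices_gt_k_edges by blast
  moreover have "finite e" using G finite_edge by auto
  with X have "2 \<le> card (e \<inter> vertices T)" using card_inter_le_inter_vertices[of e X T] by linarith
  ultimately show False
    using card_vertices_tree_extension[OF G(1) tree(1)] r by simp
qed

lemma connected_subgraph_contains_trees:
  assumes F: "F \<subseteq> G" "connected_hg F"
    and n: "1 \<le> n" "n \<le> card F" "n < k"
  shows "\<exists>T\<subseteq>F. card T = n \<and> is_tree r n T"
  using n
proof (induction n rule: nat_induct_at_least)
  case base
  then obtain e where e: "e \<in> F" by (metis card.empty ex_in_conv not_one_le_zero)
  then have "finite e" "card e = r" using F(1) finite_edge card_edge by auto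
  with e is_tree.one show ?case by (intro exI[of _ "{e}"]) auto
next
  case (Suc n)
  then obtain T where T: "T \<subseteq> F" "card T = n" "is_tree r n T" by auto
  with Suc have "T \<noteq> {}" "T \<noteq> F" by auto
  with connected_hg_grow[OF F(2) T(1)] obtain e X
    where "e \<in> F - T" "X \<in> T" "2 \<le> card (e \<inter> X)" by blast
  moreover have "finite T" using F(1) T(1) finite_subgraph by blast
  ultimately have "insert e T \<subseteq> F" "card (insert e T) = Suc n"
    and "is_tree r (Suc n) (insert e T)"
    using F(1) T Suc.prems by (auto intro: tree_extension_is_tree)
  then show ?case by blast
qed

lemma connected_subgraph_card_less:
  assumes F: "F \<subseteq> G" "connected_hg F"
  shows "card F < k"
proof (rule ccontr)
  assume "\<not> card F < k"
  with k have "1 \<le> k - 1" "k - 1 \<le> card F" "k - 1 < k" by auto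
  then obtain T where T: "T \<subseteq> F" "card T = k - 1" "is_tree r (k - 1) T"
    using connected_subgraph_contains_trees[OF F] by blast
  with k \<open>\<not> card F < k\<close> have "T \<noteq> {}" "T \<noteq> F" by auto
  with connected_hg_grow[OF F(2) T(1)] obtain e X
    where "e \<in> F - T" "X \<in> T" "2 \<le> card (e \<inter> X)" by blast
  with F(1) T k show False
    by (intro no_extension_of_tree_to_k_edges[of e T "k - 1" X]) auto
qed

lemma connected_subgraph_is_tree:
  assumes "F \<subseteq> G" "F \<noteq> {}" "connected_hg F"
  shows "\<exists>m\<in>{1..k-1}. is_tree r m F"
proof -
  have "finite F" using assms(1) finite_subgraph by blast
  with assms have card: "1 \<le> card F" "card F < k"
    using connected_subgraph_card_less by (auto simp: Suc_le_eq card_gt_0_iff)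
  then obtain T where "T \<subseteq> F" "card T = card F" "is_tree r (card F) T"
    using connected_subgraph_contains_trees[OF assms(1,3)] by blast
  with \<open>finite F\<close> have "T = F" by (simp add: card_subset_eq)
  with \<open>is_tree r (card F) T\<close> card show ?thesis by auto
qed

end

theorem lemma5p4:
  fixes G :: "'a set set" and r k :: nat
  assumes "r \<ge> 3" and "k \<ge> 2"
    and "finite G" and "r_graph r G"
    and "G_free r k G"
    and "maximal_connected_subgraph G F"
  shows "\<exists>m\<in>{1..k-1}. is_tree r m F"
proof -
  interpret G_free_hypergraph r k G
    using assms(1-5) by unfold_locales
  show ?thesis
    using assms(6) connected_subgraph_is_tree
    unfolding maximal_connected_subgraph_def by blast
qed

end
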